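(* Let $\mathcal{P}=\langle P,\le\rangle$ be a finite bounded poset with $|P|\ge 2$ and height $H$, and let $R^+(\mathcal{P})$ be its interval rank poset. Then $H(R^+(\mathcal{P}))\ge H(\mathcal{P})$.
   Context: A poset is bounded if it has a least and a greatest element. The height $H(\mathcal{Q})$ of a finite poset is the number of elements in its largest chain; $H=H(\mathcal{P})$. For $a\in P$, $\uparrow a=\{b:b\ge a\}$ and $\downarrow a=\{b:b\le a\}$ as subposets. The standard interval rank is $R^+(a)=[H(\uparrow a)-1,\;H-H(\downarrow a)]$. The interval rank poset $R^+(\mathcal{P})$ is the set $\{R^+(a):a\in P\}$ of intervals ordered by $\ge_W$, where $[x_*,x^*]\le_W[y_*,y^*]$ iff $x_*\le y_*$ and $x^*\le y^*$. *)

theory Defs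
  imports Main
begin

definition is_chain :: "'a set \<Rightarrow> ('a \<Rightarrow> 'a \<Rightarrow> bool) \<Rightarrow> 'a set \<Rightarrow> bool" where
  "is_chain S le C \<longleftrightarrow> C \<subseteq> S \<and> (\<forall>x\<in>C. \<forall>y\<in>C. le x y \<or> le y x)"

definition height :: "'a set \<Rightarrow> ('a \<Rightarrow> 'a \<Rightarrow> bool) \<Rightarrow> nat" where
  "height S le = Max (card ` {C. is_chain S le C})"

definition up_set :: "'a set \<Rightarrow> ('a \<Rightarrow> 'a \<Rightarrow> bool) \<Rightarrow> 'a \<Rightarrow> 'a set" where
  "up_set S le a = {b \<in> S. le a b}"

definition down_set :: "'a set \<Rightarrow> ('a \<Rightarrow> 'a \<Rightarrow> bool) \<Rightarrow> 'a \<Rightarrow> 'a set" where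
  "down_set S le a = {b \<in> S. le b a}"

definition partial_order_on_set :: "'a set \<Rightarrow> ('a \<Rightarrow> 'a \<Rightarrow> bool) \<Rightarrow> bool" where
  "partial_order_on_set S le \<longleftrightarrow>
     (\<forall>x\<in>S. le x x) \<and>
     (\<forall>x\<in>S. \<forall>y\<in>S. le x y \<and> le y x \<longrightarrow> x = y) \<and>
     (\<forall>x\<in>S. \<forall>y\<in>S. \<forall>z\<in>S. le x y \<and> le y z \<longrightarrow> le x z)"

definition bounded_poset :: "'a set \<Rightarrow> ('a \<Rightarrow> 'a \<Rightarrow> bool) \<Rightarrow> bool" where
  "bounded_poset S le \<longleftrightarrow>
     (\<exists>b\<in>S. \<forall>x\<in>S. le b x) \<and> (\<exists>t\<in>S. \<forall>x\<in>S. le x t)"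

definition interval_rank :: "'a set \<Rightarrow> ('a \<Rightarrow> 'a \<Rightarrow> bool) \<Rightarrow> 'a \<Rightarrow> nat \<times> nat" where
  "interval_rank S le a =
     (height (up_set S le a) le - 1, height S le - height (down_set S le a) le)"

definition le_W :: "nat \<times> nat \<Rightarrow> nat \<times> nat \<Rightarrow> bool" where
  "le_W x y \<longleftrightarrow> fst x \<le> fst y \<and> snd x \<le> snd y"

definition rank_poset_carrier :: "'a set \<Rightarrow> ('a \<Rightarrow> 'a \<Rightarrow> bool) \<Rightarrow> (nat \<times> nat) set" where
  "rank_poset_carrier S le = interval_rank S le ` S"

definition ge_W :: "nat \<times> nat \<Rightarrow> nat \<times> nat \<Rightarrow> bool" where
  "ge_W x y \<longleftrightarrow> le_W y x"

end

theory Submission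
  imports Defs
begin

text \<open>
  The interval rank is order-reversing for \<open>\<le>\<^sub>W\<close>: going up in the poset shrinks the up-set
  and enlarges the down-set. Moreover its lower end \<open>H(\<up>a) - 1\<close> strictly decreases along
  strict comparabilities, since any chain above \<open>b > a\<close> extends by \<open>a\<close>. Hence the interval rank
  maps a maximum chain of \<open>P\<close> injectively onto a chain of \<open>R\<^sup>+(P)\<close>.
\<close>

lemma partial_order_on_set_refl:
  "partial_order_on_set S le \<Longrightarrow> x \<in> S \<Longrightarrow> le x x"
  unfolding partial_order_on_set_def by blast

lemma partial_order_on_set_antisym:
  "partial_order_on_set S le \<Longrightarrow> x \<in> S \<Longrightarrow> y \<in> S \<Longrightarrow> le x y \<Longrightarrow> le y x \<Longrightarrow> x = y"
  unfolding partial_order_on_set_def by blast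

lemma partial_order_on_set_trans:
  "partial_order_on_set S le \<Longrightarrow> x \<in> S \<Longrightarrow> y \<in> S \<Longrightarrow> z \<in> S \<Longrightarrow> le x y \<Longrightarrow> le y z \<Longrightarrow> le x z"
  unfolding partial_order_on_set_def by blast

lemma finite_chain_cards: "finite S \<Longrightarrow> finite (card ` {C. is_chain S le C})"
  by (rule finite_imageI, rule finite_subset[of _ "Pow S"]) (auto simp: is_chain_def)

lemma card_chain_le_height: "finite S \<Longrightarrow> is_chain S le C \<Longrightarrow> card C \<le> height S le"
  unfolding height_def by (rule Max_ge[OF finite_chain_cards]) auto

lemma height_attained:
  assumes "finite S"
  obtains C where "is_chain S le C" "card C = height S le"
proof -
  have "height S le \<in> card ` {C. is_chain S le C}"
    unfolding height_def
    by (rule Max_in[OF finite_chain_cards[OF assms]]) (auto simp: is_chain_def)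
  then show ?thesis using that by auto
qed

lemma height_le_if_strict_mono_map:
  assumes "finite S" "finite T" "f ` S \<subseteq> T"
    and mono: "\<And>x y. x \<in> S \<Longrightarrow> y \<in> S \<Longrightarrow> le x y \<Longrightarrow> le' (f x) (f y)"
    and strict: "\<And>x y. x \<in> S \<Longrightarrow> y \<in> S \<Longrightarrow> le x y \<Longrightarrow> x \<noteq> y \<Longrightarrow> f x \<noteq> f y"
  shows "height S le \<le> height T le'"
proof -
  obtain C where C: "is_chain S le C" "card C = height S le"
    using height_attained[OF \<open>finite S\<close>] .
  have CS: "C \<subseteq> S" and comparable: "\<And>x y. x \<in> C \<Longrightarrow> y \<in> C \<Longrightarrow> le x y \<or> le y x"
    using C(1) by (auto simp: is_chain_def)
  have "inj_on f C"
  proof (rule inj_onI, rule ccontr)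
    fix x y assume "x \<in> C" "y \<in> C" "f x = f y" "x \<noteq> y"
    then show False using comparable[of x y] strict[of x y] strict[of y x] CS by auto
  qed
  moreover have "is_chain T le' (f ` C)"
    using CS \<open>f ` S \<subseteq> T\<close> comparable mono unfolding is_chain_def by blast
  ultimately show ?thesis
    using card_chain_le_height[OF \<open>finite T\<close>] C(2) card_image by fastforce
qed

lemma height_up_set_strict_antimono:
  assumes "finite P" and po: "partial_order_on_set P le"
    and "a \<in> P" "b \<in> P" "le a b" "a \<noteq> b"
  shows "height (up_set P le b) le < height (up_set P le a) le"
proof -
  have fin_up: "finite (up_set P le x)" for x using \<open>finite P\<close> by (simp add: up_set_def)
  obtain C where C: "is_chain (up_set P le b) le C" "card C = height (up_set P le b) le"
    using height_attained[OF fin_up] .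
  have above_b: "c \<in> P \<and> le b c" if "c \<in> C" for c
    using C(1) that by (auto simp: is_chain_def up_set_def)
  have above_a: "le a c" if "c \<in> C" for c
    using above_b[OF that] partial_order_on_set_trans[OF po] assms(3-5) by blast
  have "a \<notin> C"
    using above_b partial_order_on_set_antisym[OF po] assms(3-6) by blast
  have "is_chain (up_set P le a) le (insert a C)"
    using C(1) above_b above_a partial_order_on_set_refl[OF po] \<open>a \<in> P\<close>
    unfolding is_chain_def up_set_def by auto
  then have "card (insert a C) \<le> height (up_set P le a) le"
    using card_chain_le_height[OF fin_up] by blast
  moreover have "finite C" using C(1) fin_up by (meson finite_subset is_chain_def)
  ultimately show ?thesis using C(2) \<open>a \<notin> C\<close> by simp
qed

lemma height_up_set_pos:
  assumes "finite P" "partial_order_on_set P le" "b \<in> P"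
  shows "1 \<le> height (up_set P le b) le"
proof -
  have "is_chain (up_set P le b) le {b}"
    using partial_order_on_set_refl[OF assms(2,3)] assms(3) unfolding is_chain_def up_set_def by auto
  then show ?thesis
    using card_chain_le_height[of "up_set P le b" le "{b}"] assms(1) by (auto simp: up_set_def)
qed

lemma height_down_set_mono:
  assumes "finite P" and po: "partial_order_on_set P le"
    and "a \<in> P" "b \<in> P" "le a b"
  shows "height (down_set P le a) le \<le> height (down_set P le b) le"
proof -
  have fin_down: "finite (down_set P le x)" for x using \<open>finite P\<close> by (simp add: down_set_def)
  obtain C where C: "is_chain (down_set P le a) le C" "card C = height (down_set P le a) le"
    using height_attained[OF fin_down] .
  have "is_chain (down_set P le b) le C"
    using C(1) assms(3-5) partial_order_on_set_trans[OF po] unfolding is_chain_def down_set_def by blast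
  then show ?thesis using C(2) card_chain_le_height[OF fin_down] by force
qed

lemma interval_rank_antimono:
  assumes "finite P" "partial_order_on_set P le" "a \<in> P" "b \<in> P" "le a b"
  shows "ge_W (interval_rank P le a) (interval_rank P le b)"
proof (cases "a = b")
  case False
  then show ?thesis
    using height_up_set_strict_antimono[OF assms False] height_down_set_mono[OF assms]
    by (auto simp: ge_W_def le_W_def interval_rank_def)
qed (simp add: ge_W_def le_W_def)

lemma interval_rank_strict:
  assumes "finite P" "partial_order_on_set P le" "a \<in> P" "b \<in> P" "le a b" "a \<noteq> b"
  shows "interval_rank P le a \<noteq> interval_rank P le b"
  using height_up_set_strict_antimono[OF assms] height_up_set_pos[OF assms(1,2,4)]
  by (simp add: interval_rank_def)

theorem proposition5:
  fixes P :: "'a set" and le :: "'a \<Rightarrow> 'a \<Rightarrow> bool"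
  assumes "finite P"
    and "partial_order_on_set P le"
    and "bounded_poset P le"
    and "card P \<ge> 2"
  shows "height (rank_poset_carrier P le) ge_W \<ge> height P le"
  using assms(1) interval_rank_antimono[OF assms(1,2)] interval_rank_strict[OF assms(1,2)]
  by (intro height_le_if_strict_mono_map) (auto simp: rank_poset_carrier_def)

end
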